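(* There exists a temporal clique $G$ on $n$ vertices such that every temporal $2$-spanner of $G$ has size $\Omega(n^2)$.
   Context: A temporal graph is an undirected graph $G=(V,E)$ with a labeling $\lambda: E\to\mathbb{N}^+$; a temporal clique is one whose underlying graph is complete. A temporal path is a path whose traversed edges have non-decreasing labels in the order of traversal; its length is its number of edges, and $d_G(u,v)$ is the minimum length of a temporal path from $u$ to $v$ in $G$ ($+\infty$ if none). A temporal $\alpha$-spanner of $G$ is a subgraph $H$ with $V(H)=V$, $E(H)\subseteq E$ (same labels), such that $d_H(u,v)\le\alpha\, d_G(u,v)$ for all $u,v\in V$. The size of $H$ is its number of edges. *)

theory Defs
  imports Main "HOL-Library.Extended_Nat"
begin

definition temporal_graph :: "'a set \<Rightarrow> 'a set set \<Rightarrow> ('a set \<Rightarrow> nat) \<Rightarrow> bool" where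
  "temporal_graph V E lam \<longleftrightarrow>
     (\<forall>e\<in>E. \<exists>u v. e = {u, v} \<and> u \<noteq> v \<and> u \<in> V \<and> v \<in> V) \<and> (\<forall>e\<in>E. lam e > 0)"

definition temporal_clique :: "'a set \<Rightarrow> 'a set set \<Rightarrow> ('a set \<Rightarrow> nat) \<Rightarrow> bool" where
  "temporal_clique V E lam \<longleftrightarrow> temporal_graph V E lam \<and>
     E = {e. \<exists>u v. e = {u, v} \<and> u \<noteq> v \<and> u \<in> V \<and> v \<in> V}"

definition temporal_path :: "'a set set \<Rightarrow> ('a set \<Rightarrow> nat) \<Rightarrow> 'a list \<Rightarrow> bool" where
  "temporal_path E lam vs \<longleftrightarrow> vs \<noteq> [] \<and> distinct vs \<and>
     (\<forall>i. Suc i < length vs \<longrightarrow> {vs ! i, vs ! Suc i} \<in> E) \<and>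
     (\<forall>i. Suc (Suc i) < length vs \<longrightarrow>
         lam {vs ! i, vs ! Suc i} \<le> lam {vs ! Suc i, vs ! Suc (Suc i)})"

text \<open>Temporal distance: minimal length (number of edges) of a temporal path from u to v;
  infinity if there is none.\<close>

definition temporal_dist :: "'a set set \<Rightarrow> ('a set \<Rightarrow> nat) \<Rightarrow> 'a \<Rightarrow> 'a \<Rightarrow> enat" where
  "temporal_dist E lam u v =
     Inf {enat (length vs - 1) | vs. temporal_path E lam vs \<and> hd vs = u \<and> last vs = v}"

definition temporal_spanner :: "'a set \<Rightarrow> 'a set set \<Rightarrow> ('a set \<Rightarrow> nat) \<Rightarrow> nat \<Rightarrow> 'a set set \<Rightarrow> bool" where
  "temporal_spanner V E lam \<alpha> H \<longleftrightarrow> H \<subseteq> E \<and>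
     (\<forall>u\<in>V. \<forall>v\<in>V. temporal_dist H lam u v \<le> enat \<alpha> * temporal_dist E lam u v)"

end

theory Submission
  imports Defs
begin

text \<open>Split the vertices into two halves \<open>L\<close> and \<open>R\<close> and label the edges inside \<open>L\<close> by 3,
  the edges between \<open>L\<close> and \<open>R\<close> by 2 and the edges inside \<open>R\<close> by 1. A walk of two edges from
  \<open>L\<close> to \<open>R\<close> then reads either the labels 3, 2 or the labels 2, 1, so it is never temporal.
  Hence the direct edge is the only temporal path of length at most 2 from \<open>a \<in> L\<close> to \<open>b \<in> R\<close>,
  and every temporal 2-spanner keeps all \<open>|L| |R| \<ge> n\<^sup>2 / 8\<close> edges between the halves.\<close>

definition complete_edges :: "'a set \<Rightarrow> 'a set set" where
  "complete_edges V = {e. \<exists>u v. e = {u, v} \<and> u \<noteq> v \<and> u \<in> V \<and> v \<in> V}"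

definition split_labeling :: "'a set \<Rightarrow> 'a set \<Rightarrow> nat" where
  "split_labeling L e = (if e \<subseteq> L then 3 else if e \<inter> L = {} then 1 else 2)"

lemma temporal_clique_complete_edges:
  assumes "\<forall>e\<in>complete_edges V. lam e > 0"
  shows "temporal_clique V (complete_edges V) lam"
  using assms unfolding temporal_clique_def temporal_graph_def complete_edges_def by blast

lemma finite_complete_edges: "finite V \<Longrightarrow> finite (complete_edges V)"
  by (rule finite_subset[of _ "Pow V"]) (auto simp: complete_edges_def)

lemma temporal_dist_edge_le_1:
  assumes "{u, v} \<in> E" "u \<noteq> v"
  shows "temporal_dist E lam u v \<le> 1"
proof -
  have "temporal_path E lam [u, v]"
    using assms by (auto simp: temporal_path_def nth_Cons split: nat.splits)
  then show ?thesis
    unfolding temporal_dist_def one_enat_def by (intro Inf_lower) force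
qed

lemma temporal_dist_le_imp_temporal_path:
  assumes "temporal_dist E lam u v \<le> enat m"
  obtains vs where "temporal_path E lam vs" "hd vs = u" "last vs = v" "length vs \<le> Suc m"
proof -
  have "temporal_dist E lam u v < enat (Suc m)"
    using assms by (simp add: le_less_trans)
  then obtain vs where "temporal_path E lam vs" "hd vs = u" "last vs = v"
    and "enat (length vs - 1) < enat (Suc m)"
    unfolding temporal_dist_def Inf_less_iff by blast
  with that show ?thesis by simp
qed

lemma short_list_from_to:
  assumes "vs \<noteq> []" "length vs \<le> 3" "hd vs = a" "last vs = b" "a \<noteq> b"
  shows "vs = [a, b] \<or> (\<exists>y. vs = [a, y, b])"
proof -
  have "length vs \<in> {1, 2, 3}"
    using assms(1,2) by (auto simp: less_Suc_eq_le numeral_3_eq_3 le_Suc_eq)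
  then show ?thesis
    using assms(3-) by (auto simp: numeral_2_eq_2 numeral_3_eq_3 length_Suc_conv)
qed

lemma split_labeling_decreases:
  assumes "a \<in> L" "b \<notin> L"
  shows "split_labeling L {y, b} < split_labeling L {a, y}"
  using assms by (auto simp: split_labeling_def)

lemma crossing_edge_in_temporal_2_spanner:
  assumes H: "temporal_spanner V (complete_edges V) (split_labeling L) 2 H"
    and a: "a \<in> L" "a \<in> V" and b: "b \<in> V - L"
  shows "{a, b} \<in> H"
proof -
  let ?E = "complete_edges V" and ?lam = "split_labeling L"
  have "a \<noteq> b" using a b by blast
  have "temporal_dist ?E ?lam a b \<le> 1"
    using a b \<open>a \<noteq> b\<close> by (intro temporal_dist_edge_le_1) (auto simp: complete_edges_def)
  then have "temporal_dist H ?lam a b \<le> enat 2"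
    using H a b unfolding temporal_spanner_def
    by (metis (no_types) DiffD1 mult_left_mono order.trans mult.right_neutral zero_le)
  then obtain vs where vs: "temporal_path H ?lam vs" "hd vs = a" "last vs = b" "length vs \<le> 3"
    by (rule temporal_dist_le_imp_temporal_path) simp
  then have "vs = [a, b] \<or> (\<exists>y. vs = [a, y, b])"
    using \<open>a \<noteq> b\<close> by (intro short_list_from_to) (auto simp: temporal_path_def)
  moreover have "vs \<noteq> [a, y, b]" for y
  proof
    assume "vs = [a, y, b]"
    then have "?lam {a, y} \<le> ?lam {y, b}"
      using vs(1) unfolding temporal_path_def by force
    with split_labeling_decreases[of a L b y] a b show False by simp
  qed
  ultimately show ?thesis
    using vs(1) unfolding temporal_path_def by force
qed

lemma card_temporal_2_spanner_split_labeling: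
  assumes "finite V" "L \<subseteq> V"
    and H: "temporal_spanner V (complete_edges V) (split_labeling L) 2 H"
  shows "card L * card (V - L) \<le> card H"
proof -
  have "finite H"
    using H \<open>finite V\<close> finite_complete_edges finite_subset
    unfolding temporal_spanner_def by blast
  have "inj_on (\<lambda>(a, b). {a, b}) (L \<times> (V - L))"
    by (auto simp: inj_on_def doubleton_eq_iff)
  moreover have "(\<lambda>(a, b). {a, b}) ` (L \<times> (V - L)) \<subseteq> H"
    using crossing_edge_in_temporal_2_spanner[OF H] \<open>L \<subseteq> V\<close> by auto
  ultimately have "card (L \<times> (V - L)) \<le> card H"
    using card_inj_on_le \<open>finite H\<close> by blast
  then show ?thesis by (simp add: card_cartesian_product)
qed

lemma square_le_8_times_halves:
  fixes n :: nat
  assumes "n \<ge> 2"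
  shows "n\<^sup>2 \<le> 8 * ((n div 2) * (n - n div 2))"
proof -
  have "n \<le> 4 * (n div 2)" "n \<le> 2 * (n - n div 2)"
    using assms by presburger+
  then have "n * n \<le> (4 * (n div 2)) * (2 * (n - n div 2))"
    by (rule mult_le_mono)
  then show ?thesis by (simp add: power2_eq_square)
qed

theorem theorem6:
  "\<exists>c::real. c > 0 \<and> (\<exists>N::nat. \<forall>n\<ge>N. \<exists>(V::nat set) E lam.
      card V = n \<and> finite V \<and> temporal_clique V E lam \<and>
      (\<forall>H. temporal_spanner V E lam 2 H \<longrightarrow> real (card H) \<ge> c * real n ^ 2))"
proof (intro exI[of _ "1/8"] conjI exI[of _ 2] allI impI)
  fix n :: nat
  assume "2 \<le> n"
  let ?V = "{..<n}" and ?L = "{..<n div 2}"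
  have "temporal_clique ?V (complete_edges ?V) (split_labeling ?L)"
    by (rule temporal_clique_complete_edges) (simp add: split_labeling_def)
  moreover have "real n ^ 2 / 8 \<le> real (card H)"
    if "temporal_spanner ?V (complete_edges ?V) (split_labeling ?L) 2 H" for H
  proof -
    have "card ?L * card (?V - ?L) \<le> card H"
      using that by (intro card_temporal_2_spanner_split_labeling) auto
    then have "n\<^sup>2 \<le> 8 * card H"
      using square_le_8_times_halves[OF \<open>2 \<le> n\<close>] by simp
    then show ?thesis by (simp add: of_nat_mono flip: of_nat_power)
  qed
  ultimately show "\<exists>(V::nat set) E lam. card V = n \<and> finite V \<and> temporal_clique V E lam \<and>
      (\<forall>H. temporal_spanner V E lam 2 H \<longrightarrow> real (card H) \<ge> 1/8 * real n ^ 2)"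
    by (intro exI[of _ ?V] exI[of _ "complete_edges ?V"] exI[of _ "split_labeling ?L"]) auto
qed (simp_all)

end
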